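(* Let $n\ge 4$ and let $\rho=(a^b)$ be a partition of $n$ with $a,b\ge 2$ and $ab=n$ (i.e. $b$ parts all equal to $a$). Then $\rho$ has exactly two neighbors in the partition graph $G_n$, namely \[ \alpha(\rho)=(a+1,a^{\,b-2},a-1)\quad\text{and}\quad \beta(\rho)=(a^{\,b-1},a-1,1), \] where $\alpha(\rho)=(a+1,a-1)$ when $b=2$.
   Context: The partition graph $G_n$ has as vertices the integer partitions of $n$; two partitions are adjacent if one is obtained from the other by a single elementary unit transfer followed by reordering: decrease one part by $1$ and either increase a different part by $1$ or create a new part equal to $1$, then delete a part that became $0$ and sort the parts in nonincreasing order (the result being a partition different from the original). Exponent notation $a^k$ denotes $k$ parts equal to $a$. *)

theory Defs
  imports Main
begin

definition is_partition :: "nat \<Rightarrow> nat list \<Rightarrow> bool" where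
  "is_partition n p \<longleftrightarrow> sorted_wrt (\<ge>) p \<and> (\<forall>x\<in>set p. 0 < x) \<and> sum_list p = n"

definition normalize :: "nat list \<Rightarrow> nat list" where
  "normalize xs = rev (sort (filter (\<lambda>x. x \<noteq> 0) xs))"

definition unit_transfer :: "nat list \<Rightarrow> nat list \<Rightarrow> bool" where
  "unit_transfer p q \<longleftrightarrow> q \<noteq> p \<and>
     (\<exists>i < length p.
        (\<exists>j < length p. j \<noteq> i \<and> q = normalize (p[i := p ! i - 1, j := p ! j + 1]))
      \<or> q = normalize (p[i := p ! i - 1] @ [1]))"

definition adjacent :: "nat \<Rightarrow> nat list \<Rightarrow> nat list \<Rightarrow> bool" where
  "adjacent n p q \<longleftrightarrow> is_partition n p \<and> is_partition n q \<and>
     (unit_transfer p q \<or> unit_transfer q p)"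

end

(*
  Everything is computed on multisets of parts, since normalize only forgets the order
  (and the zero parts) of a list.  All parts of a^b equal a, so a transfer out of a^b moves a
  unit from one a either to another a, giving alpha, or to a new part, giving beta.
  Conversely, if a transfer turns q into a^b, then the receiving part ends as a and the
  donating part ends as a or vanishes, while every other part of q is already a; counting
  parts shows that q is alpha or beta.  A transfer creating a new part 1 cannot end in a^b
  because a >= 2.
*)
theory Submission
  imports Defs "HOL-Library.Multiset"
begin

lemma sorted_wrt_ge_mset_eq:
  fixes xs ys :: "'a::linorder list"
  assumes "sorted_wrt (\<ge>) xs" "sorted_wrt (\<ge>) ys" "mset xs = mset ys"
  shows "xs = ys"
proof -
  have "sorted (rev xs)" "sorted (rev ys)"
    using assms by (simp_all add: sorted_wrt_rev)
  then have "rev xs = rev ys"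
    using assms(3) by (metis mset_rev properties_for_sort sorted_sort_id)
  then show ?thesis by simp
qed

lemma mset_normalize: "mset (normalize xs) = filter_mset (\<lambda>x. x \<noteq> 0) (mset xs)"
  by (simp add: normalize_def)

lemma sorted_wrt_normalize: "sorted_wrt (\<ge>) (normalize xs)"
  by (simp add: normalize_def sorted_wrt_rev)

lemma normalize_eq_partitionI:
  assumes "is_partition n ys" "mset xs = mset ys"
  shows "normalize xs = ys"
proof (rule sorted_wrt_ge_mset_eq[OF sorted_wrt_normalize])
  have "filter_mset (\<lambda>x. x \<noteq> 0) (mset ys) = mset ys"
    using assms(1) by (auto simp: is_partition_def filter_mset_eq_conv)
  then show "mset (normalize xs) = mset ys"
    using assms(2) by (simp add: mset_normalize)
qed (use assms(1) in \<open>simp add: is_partition_def\<close>)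

lemma mset_update_plus:
  assumes "k < length xs"
  shows "mset (xs[k := v]) + {#xs ! k#} = mset xs + {#v#}"
  using assms by (simp add: mset_update insert_DiffM)

lemma nth_pair_subseteq_mset:
  assumes "i < length xs" "j < length xs" "i \<noteq> j"
  shows "{#xs ! i, xs ! j#} \<subseteq># mset xs"
proof -
  have "{#xs ! i, xs ! j#} = image_mset ((!) xs) (mset_set {i, j})"
    using assms by simp
  also have "\<dots> \<subseteq># image_mset ((!) xs) (mset_set {0..<length xs})"
    using assms by (intro image_mset_subseteq_mono subset_imp_msubset_mset_set) auto
  also have "\<dots> = mset xs"
    by (metis map_nth mset_map mset_upt)
  finally show ?thesis .
qed

lemma mset_update_update:
  assumes "i < length xs" "j < length xs" "i \<noteq> j"
  shows "mset (xs[i := u, j := v]) = mset xs - {#xs ! i, xs ! j#} + {#u, v#}"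
proof -
  have "mset (xs[i := u, j := v]) + {#xs ! j#} = mset (xs[i := u]) + {#v#}"
    using mset_update_plus[of j "xs[i := u]" v] assms by simp
  moreover have "mset (xs[i := u]) + {#xs ! i#} = mset xs + {#u#}"
    using mset_update_plus[of i xs u] assms by simp
  ultimately have "mset (xs[i := u, j := v]) + {#xs ! i, xs ! j#} = mset xs + {#u, v#}"
    by (metis add_mset_add_single union_commute union_assoc add_mset_commute)
  then show ?thesis
    using nth_pair_subseteq_mset[OF assms]
    by (metis add_diff_cancel_right' subset_mset.diff_add_assoc2)
qed

lemma sorted_wrt_ge_replicate: "sorted_wrt (\<ge>) (replicate n (x::'a::preorder))"
  by (induction n) auto

definition rect_alpha :: "nat \<Rightarrow> nat \<Rightarrow> nat list" where
  "rect_alpha a b = (a + 1) # replicate (b - 2) a @ [a - 1]"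

definition rect_beta :: "nat \<Rightarrow> nat \<Rightarrow> nat list" where
  "rect_beta a b = replicate (b - 1) a @ [a - 1, 1]"

lemma mset_rect_alpha: "mset (rect_alpha a b) = replicate_mset (b - 2) a + {#a + 1, a - 1#}"
  by (simp add: rect_alpha_def)

lemma mset_rect_beta: "mset (rect_beta a b) = replicate_mset (b - 1) a + {#a - 1, 1#}"
  by (simp add: rect_beta_def)

lemma sorted_wrt_rect_alpha: "sorted_wrt (\<ge>) (rect_alpha a b)"
  by (simp add: rect_alpha_def sorted_wrt_append sorted_wrt_ge_replicate)

lemma sorted_wrt_rect_beta: "a \<ge> 2 \<Longrightarrow> sorted_wrt (\<ge>) (rect_beta a b)"
  by (simp add: rect_beta_def sorted_wrt_append sorted_wrt_ge_replicate)

lemma is_partition_rect_alpha: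
  assumes "a \<ge> 2" "b \<ge> 2"
  shows "is_partition (a * b) (rect_alpha a b)"
proof -
  have "a + 1 + (b - 2) * a + (a - 1) = a * b"
    using assms by (simp add: algebra_simps flip: mult_Suc)
  then show ?thesis
    using assms sorted_wrt_rect_alpha by (auto simp: is_partition_def rect_alpha_def sum_list_replicate)
qed

lemma is_partition_rect_beta:
  assumes "a \<ge> 2" "b \<ge> 1"
  shows "is_partition (a * b) (rect_beta a b)"
proof -
  have "(b - 1) * a + (a - 1 + 1) = a * b"
    using assms by (simp add: algebra_simps)
  then show ?thesis
    using assms sorted_wrt_rect_beta by (auto simp: is_partition_def rect_beta_def sum_list_replicate)
qed

lemma is_partition_replicate: "a > 0 \<Longrightarrow> is_partition (a * b) (replicate b a)"
  by (simp add: is_partition_def sorted_wrt_ge_replicate sum_list_replicate)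

lemma normalize_replicate_update_update:
  assumes "i < b" "j < b" "i \<noteq> j" "a \<ge> 2"
  shows "normalize ((replicate b a)[i := a - 1, j := a + 1]) = rect_alpha a b"
proof (rule normalize_eq_partitionI)
  have "mset ((replicate b a)[i := a - 1, j := a + 1])
      = replicate_mset b a - {#a, a#} + {#a - 1, a + 1#}"
    using mset_update_update[of i "replicate b a" j] assms by simp
  moreover have "b \<ge> 2"
    using assms by linarith
  then obtain c where "b = Suc (Suc c)"
    by (metis add_2_eq_Suc le_Suc_ex)
  ultimately show "mset ((replicate b a)[i := a - 1, j := a + 1]) = mset (rect_alpha a b)"
    by (simp add: mset_rect_alpha)
  show "is_partition (a * b) (rect_alpha a b)"
    using assms by (intro is_partition_rect_alpha) linarith+
qed

lemma normalize_replicate_update_append_one: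
  assumes "i < b" "a \<ge> 2"
  shows "normalize ((replicate b a)[i := a - 1] @ [1]) = rect_beta a b"
proof (rule normalize_eq_partitionI)
  have "mset ((replicate b a)[i := a - 1]) + {#a#} = replicate_mset b a + {#a - 1#}"
    using mset_update_plus[of i "replicate b a" "a - 1"] assms by simp
  moreover obtain c where "b = Suc c"
    using assms(1) by (cases b) auto
  ultimately show "mset ((replicate b a)[i := a - 1] @ [1]) = mset (rect_beta a b)"
    by (simp add: mset_rect_beta)
  show "is_partition (a * b) (rect_beta a b)"
    using assms by (intro is_partition_rect_beta) linarith+
qed

lemma unit_transfer_replicate_iff:
  assumes "a \<ge> 2" "b \<ge> 2"
  shows "unit_transfer (replicate b a) q \<longleftrightarrow> q = rect_alpha a b \<or> q = rect_beta a b"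
proof
  assume "unit_transfer (replicate b a) q"
  then obtain i where "i < b"
    and "(\<exists>j < b. j \<noteq> i \<and> q = normalize ((replicate b a)[i := a - 1, j := a + 1]))
      \<or> q = normalize ((replicate b a)[i := a - 1] @ [1])"
    unfolding unit_transfer_def by (auto cong: conj_cong)
  then show "q = rect_alpha a b \<or> q = rect_beta a b"
    using assms normalize_replicate_update_update normalize_replicate_update_append_one
    by blast
next
  assume q: "q = rect_alpha a b \<or> q = rect_beta a b"
  have "hd (rect_alpha a b) \<noteq> hd (replicate b a)"
    using assms by (simp add: rect_alpha_def)
  moreover have "length (rect_beta a b) \<noteq> length (replicate b a)"
    using assms by (simp add: rect_beta_def)
  ultimately have "q \<noteq> replicate b a"
    using q by metis
  moreover have "(\<exists>j < b. j \<noteq> 0 \<and> q = normalize ((replicate b a)[0 := a - 1, j := a + 1]))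
      \<or> q = normalize ((replicate b a)[0 := a - 1] @ [1])"
    using q assms normalize_replicate_update_update[of 0 b 1 a]
      normalize_replicate_update_append_one[of 0 b a] by force
  ultimately show "unit_transfer (replicate b a) q"
    using assms unfolding unit_transfer_def by (intro conjI exI[of _ 0]) (auto cong: conj_cong)
qed

lemma transfer_onto_replicate_mset:
  fixes R :: "nat multiset"
  assumes "0 \<notin># R" "x > 0"
    and "filter_mset (\<lambda>z. z \<noteq> 0) (R + {#x - 1, y + 1#}) = replicate_mset b a"
  shows "R + {#x, y#} = replicate_mset (b - 2) a + {#a + 1, a - 1#}
    \<or> R + {#x, y#} = replicate_mset (b - 1) a + {#a - 1, 1#}"
proof -
  define X where "X = filter_mset (\<lambda>z. z \<noteq> 0) {#x - 1#}"
  have "filter_mset (\<lambda>z. z \<noteq> 0) R = R"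
    using assms(1) by (auto simp: filter_mset_eq_conv) (metis gr0I)
  then have "filter_mset (\<lambda>z. z \<noteq> 0) (R + {#x - 1, y + 1#}) = R + X + {#y + 1#}"
    by (simp add: X_def)
  then have parts: "R + X + {#y + 1#} = replicate_mset b a"
    using assms(3) by simp
  then have "set_mset (R + X + {#y + 1#}) \<subseteq> {a}"
    by simp
  then have "set_mset R \<subseteq> {a}" "y + 1 = a" "set_mset X \<subseteq> {a}"
    by auto
  have R: "R = replicate_mset (size R) a"
    using \<open>set_mset R \<subseteq> {a}\<close> by (rule set_mset_subset_singletonD)
  have size: "size R + size X + 1 = b"
    using arg_cong[OF parts, of size] by simp
  show ?thesis
  proof (cases "x = 1")
    case True
    then have "size R = b - 1"
      using size by (simp add: X_def)
    with R have "R = replicate_mset (b - 1) a"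
      by metis
    then show ?thesis
      using True \<open>y + 1 = a\<close> by (auto simp: add_mset_commute)
  next
    case False
    then have "X = {#x - 1#}" "x - 1 = a" using \<open>set_mset X \<subseteq> {a}\<close> assms(2) by (auto simp: X_def)
    then have "size R = b - 2"
      using size by simp
    with R have "R = replicate_mset (b - 2) a"
      by metis
    then show ?thesis
      using \<open>x - 1 = a\<close> \<open>y + 1 = a\<close> by auto
  qed
qed

lemma unit_transfer_onto_replicate:
  assumes "is_partition n q" "unit_transfer q (replicate b a)" "a \<ge> 2"
  shows "q = rect_alpha a b \<or> q = rect_beta a b"
proof -
  obtain i where i: "i < length q"
    and "(\<exists>j < length q. j \<noteq> i \<and> replicate b a = normalize (q[i := q ! i - 1, j := q ! j + 1]))
      \<or> replicate b a = normalize (q[i := q ! i - 1] @ [1])"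
    using assms(2) unfolding unit_transfer_def by blast
  then consider
      (between_parts) j where "j < length q" "i \<noteq> j"
        "replicate b a = normalize (q[i := q ! i - 1, j := q ! j + 1])"
    | (new_part) "replicate b a = normalize (q[i := q ! i - 1] @ [1])"
    by blast
  then show ?thesis
  proof cases
    case new_part
    then have "1 \<in># mset (replicate b a)"
      by (simp add: mset_normalize)
    with assms(3) show ?thesis
      by (simp split: if_splits)
  next
    case (between_parts j)
    define R where "R = mset q - {#q ! i, q ! j#}"
    have q: "mset q = R + {#q ! i, q ! j#}"
      using nth_pair_subseteq_mset[OF i between_parts(1,2)] unfolding R_def
      by (rule subset_mset.diff_add[symmetric])
    have "mset (q[i := q ! i - 1, j := q ! j + 1]) = R + {#q ! i - 1, q ! j + 1#}"
      using mset_update_update[OF i between_parts(1,2)] by (simp add: R_def)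
    then have "filter_mset (\<lambda>z. z \<noteq> 0) (R + {#q ! i - 1, q ! j + 1#}) = replicate_mset b a"
      using arg_cong[OF between_parts(3), of mset] by (simp add: mset_normalize)
    moreover have "0 \<notin># R"
      using assms(1) unfolding R_def is_partition_def by (metis in_diffD less_irrefl set_mset_mset)
    moreover have "q ! i > 0"
      using assms(1) i by (simp add: is_partition_def)
    ultimately have "mset q = mset (rect_alpha a b) \<or> mset q = mset (rect_beta a b)"
      using transfer_onto_replicate_mset q by (simp add: mset_rect_alpha mset_rect_beta)
    then show ?thesis
      using assms sorted_wrt_ge_mset_eq sorted_wrt_rect_alpha sorted_wrt_rect_beta
      by (metis is_partition_def)
  qed
qed

theorem lemma3p1:
  fixes n a b :: nat
  assumes "n \<ge> 4" and "a \<ge> 2" and "b \<ge> 2" and "a * b = n"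
  shows "{q. adjacent n (replicate b a) q} =
           {(a + 1) # replicate (b - 2) a @ [a - 1], replicate (b - 1) a @ [a - 1, 1]}
         \<and> (a + 1) # replicate (b - 2) a @ [a - 1] \<noteq> replicate (b - 1) a @ [a - 1, 1]"
proof -
  have "adjacent n (replicate b a) q \<longleftrightarrow> q = rect_alpha a b \<or> q = rect_beta a b" for q
  proof
    assume "adjacent n (replicate b a) q"
    then show "q = rect_alpha a b \<or> q = rect_beta a b"
      using assms(2,3) unit_transfer_replicate_iff unit_transfer_onto_replicate
      unfolding adjacent_def by blast
  next
    assume "q = rect_alpha a b \<or> q = rect_beta a b"
    moreover have "is_partition n (rect_alpha a b)" "is_partition n (rect_beta a b)"
      "is_partition n (replicate b a)"
      using assms is_partition_rect_alpha is_partition_rect_beta is_partition_replicate by auto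
    ultimately show "adjacent n (replicate b a) q"
      using assms(2,3) unit_transfer_replicate_iff unfolding adjacent_def by blast
  qed
  then have "{q. adjacent n (replicate b a) q} = {rect_alpha a b, rect_beta a b}"
    by blast
  moreover have "length (rect_alpha a b) \<noteq> length (rect_beta a b)"
    using assms(3) by (simp add: rect_alpha_def rect_beta_def)
  then have "rect_alpha a b \<noteq> rect_beta a b"
    by metis
  ultimately show ?thesis
    unfolding rect_alpha_def rect_beta_def by (rule conjI)
qed

end
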